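(* Let $e\ge1$ and let $Q$ be a generic binary quadratic form. Then for every integer $p$ with $0\le p\le e$, the transvectant $(Q^e,Q^e)_{2p}$ is not identically zero.
   Context: For binary forms $A,B$ in $(x_0,x_1)$ of degrees $a,b$ and $k\ge0$, $(A,B)_k=\frac{(a-k)!(b-k)!}{a!\,b!}\bigl[\Omega^kA(x_0,x_1)B(y_0,y_1)\bigr]_{\underline{y}:=\underline{x}}$, where $\Omega=\frac{\partial^2}{\partial x_0\partial y_1}-\frac{\partial^2}{\partial x_1\partial y_0}$. *)

theory Defs
  imports Complex_Main
begin

text \<open>Polynomials are represented by their coefficient maps.
  A polynomial in (x0,x1) is a map  nat \<times> nat \<Rightarrow> complex, the pair (i,j) being the
  exponent of x0^i x1^j; a polynomial in (x0,x1,y0,y1) is a map on exponent quadruples.\<close>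

type_synonym poly2 = "nat \<times> nat \<Rightarrow> complex"
type_synonym poly4 = "nat \<times> nat \<times> nat \<times> nat \<Rightarrow> complex"

definition p2_mult :: "poly2 \<Rightarrow> poly2 \<Rightarrow> poly2" where
  "p2_mult P R = (\<lambda>(i,j). \<Sum>i1\<le>i. \<Sum>j1\<le>j. P (i1,j1) * R (i - i1, j - j1))"

definition p2_one :: poly2 where
  "p2_one = (\<lambda>m. if m = (0,0) then 1 else 0)"

primrec p2_pow :: "poly2 \<Rightarrow> nat \<Rightarrow> poly2" where
  "p2_pow P 0 = p2_one"
| "p2_pow P (Suc n) = p2_mult P (p2_pow P n)"

definition tensor :: "poly2 \<Rightarrow> poly2 \<Rightarrow> poly4" where
  "tensor A B = (\<lambda>(i,j,k,l). A (i,j) * B (k,l))"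

definition dx0 :: "poly4 \<Rightarrow> poly4" where
  "dx0 F = (\<lambda>(i,j,k,l). of_nat (Suc i) * F (Suc i, j, k, l))"
definition dx1 :: "poly4 \<Rightarrow> poly4" where
  "dx1 F = (\<lambda>(i,j,k,l). of_nat (Suc j) * F (i, Suc j, k, l))"
definition dy0 :: "poly4 \<Rightarrow> poly4" where
  "dy0 F = (\<lambda>(i,j,k,l). of_nat (Suc k) * F (i, j, Suc k, l))"
definition dy1 :: "poly4 \<Rightarrow> poly4" where
  "dy1 F = (\<lambda>(i,j,k,l). of_nat (Suc l) * F (i, j, k, Suc l))"

definition Omega :: "poly4 \<Rightarrow> poly4" where
  "Omega F = (\<lambda>m. dx0 (dy1 F) m - dx1 (dy0 F) m)"

text \<open>Substitution y := x.\<close>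
definition diag :: "poly4 \<Rightarrow> poly2" where
  "diag F = (\<lambda>(i,j). \<Sum>i1\<le>i. \<Sum>j1\<le>j. F (i1, j1, i - i1, j - j1))"

definition transvectant :: "nat \<Rightarrow> nat \<Rightarrow> poly2 \<Rightarrow> poly2 \<Rightarrow> nat \<Rightarrow> poly2" where
  "transvectant a b A B k =
     (\<lambda>m. (fact (a - k) * fact (b - k) / (fact a * fact b)) * diag ((Omega ^^ k) (tensor A B)) m)"

definition quad_form :: "complex \<Rightarrow> complex \<Rightarrow> complex \<Rightarrow> poly2" where
  "quad_form a b c = (\<lambda>m. if m = (2,0) then a else if m = (1,1) then b
                          else if m = (0,2) then c else 0)"

end

theory Submission
  imports Defs "HOL-Library.Complex_Order"
begin

text \<open>Take Q = x0^2 + x1^2. All coefficients of Q^e are nonnegative and sit on even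
  exponents, so the coefficient of x0^i x1^j y0^m y1^l in F = Q^e(x) Q^e(y) has sign (-1)^j.
  The Omega process preserves this sign pattern, since its term -d^2/dx1 dy0 shifts j by one
  and flips the sign; hence no cancellation occurs in Omega^(2p) F, and its coefficient at
  x1^(2e-2p) y1^(2e-2p) is nonzero. After y := x, the coefficient of x1^(4e-4p) collects the
  coefficients at x1^j y1^(4e-4p-j); for odd j these vanish by parity, and for even j they
  are nonnegative, so no cancellation occurs there either.\<close>

lemma complex_of_nat_mult_nonneg: "0 \<le> (x::complex) \<Longrightarrow> 0 \<le> of_nat a * of_nat b * x"
  by (simp add: less_eq_complex_def)

lemma double_sum_nonzero:
  fixes f :: "nat \<Rightarrow> nat \<Rightarrow> 'a::ordered_comm_monoid_add"
  assumes "\<And>i j. i \<le> a \<Longrightarrow> j \<le> b \<Longrightarrow> 0 \<le> f i j"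
    and "i \<le> a" "j \<le> b" "f i j \<noteq> 0"
  shows "(\<Sum>i\<le>a. \<Sum>j\<le>b. f i j) \<noteq> 0"
proof -
  have "(\<Sum>j\<le>b. f i j) \<noteq> 0"
    using assms sum_nonneg_eq_0_iff[of "{..b}" "f i"] by auto
  then show ?thesis
    using assms sum_nonneg_eq_0_iff[of "{..a}" "\<lambda>i. \<Sum>j\<le>b. f i j"] by (auto intro: sum_nonneg)
qed

definition even_supported :: "poly2 \<Rightarrow> bool" where
  "even_supported P \<longleftrightarrow> (\<forall>i j. P (i,j) \<noteq> 0 \<longrightarrow> even i \<and> even j)"

lemma p2_mult_nonneg:
  assumes "\<And>m. 0 \<le> P m" "\<And>m. 0 \<le> R m"
  shows "0 \<le> p2_mult P R m"
  using assms by (auto simp: p2_mult_def intro!: sum_nonneg mult_nonneg_nonneg split: prod.split)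

lemma p2_mult_nonzero:
  assumes "\<And>m. 0 \<le> P m" "\<And>m. 0 \<le> R m" "P (a,b) \<noteq> 0" "R (c,d) \<noteq> 0"
  shows "p2_mult P R (a+c, b+d) \<noteq> 0"
proof -
  have "(\<Sum>i\<le>a+c. \<Sum>j\<le>b+d. P (i,j) * R (a + c - i, b + d - j)) \<noteq> 0"
    using assms by (intro double_sum_nonzero[of _ _ _ a b] mult_nonneg_nonneg) auto
  then show ?thesis by (simp add: p2_mult_def)
qed

lemma p2_mult_even_supported:
  assumes "even_supported P" "even_supported R"
  shows "even_supported (p2_mult P R)"
  unfolding even_supported_def
proof (intro allI impI)
  fix i j
  assume "p2_mult P R (i,j) \<noteq> 0"
  then have "(\<Sum>i1\<le>i. \<Sum>j1\<le>j. P (i1,j1) * R (i - i1, j - j1)) \<noteq> 0"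
    by (simp add: p2_mult_def)
  then obtain i1 j1 where "i1 \<le> i" "j1 \<le> j" "P (i1,j1) \<noteq> 0" "R (i - i1, j - j1) \<noteq> 0"
    by (metis (no_types, lifting) atMost_iff mult_eq_0_iff sum.neutral)
  with assms have "even i1" "even j1" "even (i - i1)" "even (j - j1)"
    unfolding even_supported_def by blast+
  moreover have "i = i1 + (i - i1)" "j = j1 + (j - j1)"
    using \<open>i1 \<le> i\<close> \<open>j1 \<le> j\<close> by simp_all
  ultimately show "even i \<and> even j"
    by (metis even_add)
qed

lemma p2_one_nonneg: "0 \<le> p2_one m"
  by (simp add: p2_one_def less_eq_complex_def)

lemma p2_pow_nonneg: "(\<And>m. 0 \<le> P m) \<Longrightarrow> 0 \<le> p2_pow P e m"
  by (induction e arbitrary: m) (simp_all add: p2_one_nonneg p2_mult_nonneg)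

lemma p2_one_even_supported: "even_supported p2_one"
  by (simp add: even_supported_def p2_one_def)

lemma p2_pow_even_supported: "even_supported P \<Longrightarrow> even_supported (p2_pow P e)"
  by (induction e) (simp_all add: p2_one_even_supported p2_mult_even_supported)

abbreviation sum_of_squares :: poly2 where
  "sum_of_squares \<equiv> quad_form 1 0 1"

lemma sum_of_squares_nonneg: "0 \<le> sum_of_squares m"
  by (simp add: quad_form_def less_eq_complex_def)

lemma sum_of_squares_even_supported: "even_supported sum_of_squares"
  by (simp add: even_supported_def quad_form_def)

lemma sum_of_squares_pow_nonzero:
  "p + q = e \<Longrightarrow> p2_pow sum_of_squares e (2*p, 2*q) \<noteq> 0"
proof (induction e arbitrary: p q)
  case 0
  then show ?case by (simp add: p2_one_def)
next
  case (Suc e)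
  note nonneg = sum_of_squares_nonneg p2_pow_nonneg[OF sum_of_squares_nonneg]
  show ?case
  proof (cases p)
    case 0
    then obtain q' where "q = Suc q'" "p + q' = e" using Suc.prems by (cases q) auto
    with Suc.IH have "p2_mult sum_of_squares (p2_pow sum_of_squares e) (0 + 2*p, 2 + 2*q') \<noteq> 0"
      by (intro p2_mult_nonzero nonneg) (auto simp: quad_form_def)
    with \<open>q = Suc q'\<close> show ?thesis by simp
  next
    case (Suc p')
    with Suc.prems Suc.IH have "p2_mult sum_of_squares (p2_pow sum_of_squares e) (2 + 2*p', 0 + 2*q) \<noteq> 0"
      by (intro p2_mult_nonzero nonneg) (auto simp: quad_form_def)
    with Suc show ?thesis by simp
  qed
qed

definition x1_sign_alternating :: "poly4 \<Rightarrow> bool" where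
  "x1_sign_alternating F \<longleftrightarrow> (\<forall>i j m l. 0 \<le> (-1)^j * F (i,j,m,l))"

lemma Omega_apply:
  "Omega F (i,j,m,l) = of_nat (Suc i) * of_nat (Suc l) * F (Suc i, j, m, Suc l)
                     - of_nat (Suc j) * of_nat (Suc m) * F (i, Suc j, Suc m, l)"
  by (simp add: Omega_def dx0_def dx1_def dy0_def dy1_def)

lemma Omega_signed_apply:
  "(-1)^j * Omega F (i,j,m,l) =
     of_nat (Suc i) * of_nat (Suc l) * ((-1)^j * F (Suc i, j, m, Suc l))
   + of_nat (Suc j) * of_nat (Suc m) * ((-1)^Suc j * F (i, Suc j, Suc m, l))"
  by (simp add: Omega_apply algebra_simps)

lemma x1_sign_alternatingD: "x1_sign_alternating F \<Longrightarrow> 0 \<le> (-1)^j * F (i,j,m,l)"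
  by (simp add: x1_sign_alternating_def)

lemma Omega_x1_sign_alternating:
  assumes "x1_sign_alternating F"
  shows "x1_sign_alternating (Omega F)"
  unfolding x1_sign_alternating_def[of "Omega F"] Omega_signed_apply
  by (intro allI add_nonneg_nonneg complex_of_nat_mult_nonneg x1_sign_alternatingD[OF assms])

lemma Omega_pow_x1_sign_alternating:
  "x1_sign_alternating F \<Longrightarrow> x1_sign_alternating ((Omega ^^ k) F)"
  by (induction k) (simp_all add: Omega_x1_sign_alternating)

lemma Omega_nonzero:
  assumes "x1_sign_alternating F" "F (Suc i, j, m, Suc l) \<noteq> 0"
  shows "Omega F (i,j,m,l) \<noteq> 0"
proof -
  let ?A = "of_nat (Suc i) * of_nat (Suc l) * ((-1::complex)^j * F (Suc i, j, m, Suc l))"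
  let ?B = "of_nat (Suc j) * of_nat (Suc m) * ((-1::complex)^Suc j * F (i, Suc j, Suc m, l))"
  have A: "0 \<le> ?A" and B: "0 \<le> ?B"
    by (intro complex_of_nat_mult_nonneg x1_sign_alternatingD assms(1))+
  have "?A \<noteq> 0"
    using assms(2) by (simp only: mult_eq_0_iff of_nat_eq_0_iff) simp
  then have "(-1)^j * Omega F (i,j,m,l) \<noteq> 0"
    unfolding Omega_signed_apply using add_nonneg_eq_0_iff[OF A B] by blast
  then show ?thesis by (metis mult_zero_right)
qed

lemma Omega_pow_nonzero:
  assumes "x1_sign_alternating F" "F (i + k, j, m, l + k) \<noteq> 0"
  shows "(Omega ^^ k) F (i,j,m,l) \<noteq> 0"
  using assms(2)
proof (induction k arbitrary: i l)
  case (Suc k)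
  then have "(Omega ^^ k) F (Suc i, j, m, Suc l) \<noteq> 0" by simp
  then show ?case
    by (simp add: Omega_nonzero Omega_pow_x1_sign_alternating assms(1))
qed simp

lemma Omega_pow_vanishes_odd:
  assumes "\<And>i j m l. odd (i + j) \<Longrightarrow> F (i,j,m,l) = 0"
  shows "odd (i + j + k) \<Longrightarrow> (Omega ^^ k) F (i,j,m,l) = 0"
proof (induction k arbitrary: i j m l)
  case 0
  then show ?case using assms by simp
next
  case (Suc k)
  then have "(Omega ^^ k) F (Suc i, j, m, Suc l) = 0" "(Omega ^^ k) F (i, Suc j, Suc m, l) = 0"
    using Suc.IH[of "Suc i" j m "Suc l"] Suc.IH[of i "Suc j" "Suc m" l] by simp_all
  then show ?case by (simp add: Omega_apply)
qed

lemma diag_nonzero: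
  assumes "F (a,b,c,d) \<noteq> 0"
    and "\<And>i j. i \<le> a + c \<Longrightarrow> j \<le> b + d \<Longrightarrow> 0 \<le> F (i, j, a + c - i, b + d - j)"
  shows "diag F (a+c, b+d) \<noteq> 0"
proof -
  have "(\<Sum>i\<le>a+c. \<Sum>j\<le>b+d. F (i, j, a + c - i, b + d - j)) \<noteq> 0"
    using assms by (intro double_sum_nonzero[of _ _ _ a b]) auto
  then show ?thesis by (simp add: diag_def)
qed

lemma transvectant_eq_0_iff:
  "transvectant a b A B k m = 0 \<longleftrightarrow> diag ((Omega ^^ k) (tensor A B)) m = 0"
  by (simp add: transvectant_def)

lemma tensor_x1_sign_alternating:
  assumes "\<And>m. 0 \<le> A m" "\<And>m. 0 \<le> B m" "even_supported A"
  shows "x1_sign_alternating (tensor A B)"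
  unfolding x1_sign_alternating_def
proof (intro allI)
  fix i j m l
  show "0 \<le> (-1)^j * tensor A B (i,j,m,l)"
  proof (cases "A (i,j) = 0")
    case False
    with assms(3) have "even j" by (simp add: even_supported_def)
    with assms(1,2) show ?thesis by (simp add: tensor_def mult_nonneg_nonneg)
  qed (simp add: tensor_def)
qed

lemma tensor_vanishes_odd:
  "even_supported A \<Longrightarrow> odd (i + j) \<Longrightarrow> tensor A B (i,j,m,l) = 0"
  by (auto simp: even_supported_def tensor_def)

lemma Omega_pow_tensor_nonneg_on_x1_y1:
  assumes "\<And>m. 0 \<le> A m" "\<And>m. 0 \<le> B m" "even_supported A" "even k"
  shows "0 \<le> (Omega ^^ k) (tensor A B) (0, j, 0, l)"
proof (cases "even j")
  case True
  have "0 \<le> (-1)^j * (Omega ^^ k) (tensor A B) (0, j, 0, l)"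
    using assms(1-3)
    by (intro x1_sign_alternatingD Omega_pow_x1_sign_alternating tensor_x1_sign_alternating)
  with True show ?thesis by simp
next
  case False
  with assms(3,4) have "(Omega ^^ k) (tensor A B) (0, j, 0, l) = 0"
    by (intro Omega_pow_vanishes_odd tensor_vanishes_odd) simp_all
  then show ?thesis by simp
qed

theorem mainTheorem8:
  fixes e p :: nat
  assumes "e \<ge> 1" and "p \<le> e"
  shows "\<exists>a b c :: complex.
           transvectant (2*e) (2*e) (p2_pow (quad_form a b c) e) (p2_pow (quad_form a b c) e) (2*p)
             \<noteq> (\<lambda>_. 0)"
proof (intro exI)
  let ?Q = "p2_pow sum_of_squares e"
  define n where "n = 2*(e-p)"
  have Q_nonneg: "0 \<le> ?Q m" for m
    by (rule p2_pow_nonneg[OF sum_of_squares_nonneg])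
  have Q_even: "even_supported ?Q"
    by (rule p2_pow_even_supported[OF sum_of_squares_even_supported])
  have "n + 2*p = 2*e"
    using assms(2) by (simp add: n_def)
  then have "tensor ?Q ?Q (0 + 2*p, n, 0, n + 2*p) \<noteq> 0"
    using sum_of_squares_pow_nonzero[of p "e-p" e] sum_of_squares_pow_nonzero[of 0 e e] assms(2)
    by (simp add: tensor_def n_def)
  then have "(Omega ^^ (2*p)) (tensor ?Q ?Q) (0, n, 0, n) \<noteq> 0"
    by (intro Omega_pow_nonzero tensor_x1_sign_alternating Q_nonneg Q_even)
  then have "diag ((Omega ^^ (2*p)) (tensor ?Q ?Q)) (0 + 0, n + n) \<noteq> 0"
    by (rule diag_nonzero) (simp add: Omega_pow_tensor_nonneg_on_x1_y1 Q_nonneg Q_even)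
  then show "transvectant (2*e) (2*e) ?Q ?Q (2*p) \<noteq> (\<lambda>_. 0)"
    by (metis transvectant_eq_0_iff)
qed

end
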